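(* $\mathsf{LC}$ is decidable: there is an algorithm deciding, for any modal proposition $A$, whether $\mathsf{LC}\vdash A$.
   Context: Modal language: propositional variables, $\bot$, $\wedge,\vee,\to$, $\Box$. $\mathsf{iGL}$: intuitionistic propositional logic in the modal language plus $\Box(A\to B)\to(\Box A\to\Box B)$, $\Box A\to\Box\Box A$, $\Box(\Box A\to A)\to\Box A$, closed under modus ponens and necessitation. $\mathsf{LC}:=\mathsf{iGL}+\{A\to\Box A\}$. *)

theory Defs
  imports Main "HOL-Library.Nat_Bijection"
begin

datatype form =
    Var nat
  | Bot
  | And form form
  | Or form form
  | Imp form form
  | Box form

inductive LC_prf :: "form \<Rightarrow> bool" where
  ax_K:    "LC_prf (Imp A (Imp B A))"
| ax_S:    "LC_prf (Imp (Imp A (Imp B C)) (Imp (Imp A B) (Imp A C)))"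
| ax_and1: "LC_prf (Imp (And A B) A)"
| ax_and2: "LC_prf (Imp (And A B) B)"
| ax_andI: "LC_prf (Imp A (Imp B (And A B)))"
| ax_or1:  "LC_prf (Imp A (Or A B))"
| ax_or2:  "LC_prf (Imp B (Or A B))"
| ax_orE:  "LC_prf (Imp (Imp A C) (Imp (Imp B C) (Imp (Or A B) C)))"
| ax_efq:  "LC_prf (Imp Bot A)"
| ax_boxK: "LC_prf (Imp (Box (Imp A B)) (Imp (Box A) (Box B)))"
| ax_box4: "LC_prf (Imp (Box A) (Box (Box A)))"
| ax_lob:  "LC_prf (Imp (Box (Imp (Box A) A)) (Box A))"
| ax_comp: "LC_prf (Imp A (Box A))"
| mp:      "LC_prf (Imp A B) \<Longrightarrow> LC_prf A \<Longrightarrow> LC_prf B"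
| nec:     "LC_prf A \<Longrightarrow> LC_prf (Box A)"

fun enc :: "form \<Rightarrow> nat" where
  "enc (Var n) = prod_encode (0, n)"
| "enc Bot = prod_encode (1, 0)"
| "enc (And a b) = prod_encode (2, prod_encode (enc a, enc b))"
| "enc (Or a b) = prod_encode (3, prod_encode (enc a, enc b))"
| "enc (Imp a b) = prod_encode (4, prod_encode (enc a, enc b))"
| "enc (Box a) = prod_encode (5, enc a)"

section \<open>Partial (mu-)recursive functions as the model of algorithm\<close>

datatype recf =
    Zero
  | Succ
  | Proj nat
  | Comp recf "recf list"
  | Prim recf recf
  | Mn recf

inductive rec_eval :: "recf \<Rightarrow> nat list \<Rightarrow> nat \<Rightarrow> bool" where
  ev_zero: "rec_eval Zero xs 0"
| ev_succ: "rec_eval Succ (x # xs) (Suc x)"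
| ev_proj: "i < length xs \<Longrightarrow> rec_eval (Proj i) xs (xs ! i)"
| ev_comp: "length ys = length gs \<Longrightarrow> (\<forall>i < length gs. rec_eval (gs ! i) xs (ys ! i))
             \<Longrightarrow> rec_eval f ys z \<Longrightarrow> rec_eval (Comp f gs) xs z"
| ev_prim0: "rec_eval f xs y \<Longrightarrow> rec_eval (Prim f g) (0 # xs) y"
| ev_primS: "rec_eval (Prim f g) (n # xs) y \<Longrightarrow> rec_eval g (n # y # xs) z
             \<Longrightarrow> rec_eval (Prim f g) (Suc n # xs) z"
| ev_mn: "rec_eval f (n # xs) 0 \<Longrightarrow> (\<forall>m < n. \<exists>y. rec_eval f (m # xs) y \<and> y \<noteq> 0)
             \<Longrightarrow> rec_eval (Mn f) xs n"

definition decidable_forms :: "(form \<Rightarrow> bool) \<Rightarrow> bool" where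
  "decidable_forms P \<longleftrightarrow>
     (\<exists>f. \<forall>A. rec_eval f [enc A] (if P A then 1 else 0))"

end

(*
  LC is sound for finite Kripke models (W, \<le>, R, V) in which R is transitive, irreflexive,
  contained in \<le> and closed under composition with \<le> on the left. Conversely, if A is not
  provable, the prime theories inside the subformulas of A form a finite countermodel, with
  G R H iff H properly extends G and contains C whenever \<box>C \<in> G: the axiom A \<rightarrow> \<box>A lets
  Loeb's axiom act inside G itself. Coding worlds as sets of codes of subformulas, A is
  provable iff it is forced in each of the boundedly many coded models determined by enc A.
  Forcing in a coded model is a table computed row by row along the codes of subformulas, so
  the whole test is a primitive recursive function of enc A.
*)
theory Submission
  imports Defs
begin

section \<open>Kripke semantics\<close>

primrec forces ::
  "('w \<Rightarrow> bool) \<Rightarrow> ('w \<Rightarrow> 'w \<Rightarrow> bool) \<Rightarrow> ('w \<Rightarrow> 'w \<Rightarrow> bool) \<Rightarrow> (nat \<Rightarrow> 'w \<Rightarrow> bool) \<Rightarrow> 'w \<Rightarrow> form \<Rightarrow> bool"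
where
  "forces W le R V x (Var p) = V p x"
| "forces W le R V x Bot = False"
| "forces W le R V x (And a b) = (forces W le R V x a \<and> forces W le R V x b)"
| "forces W le R V x (Or a b) = (forces W le R V x a \<or> forces W le R V x b)"
| "forces W le R V x (Imp a b) =
     (\<forall>y. W y \<longrightarrow> le x y \<longrightarrow> forces W le R V y a \<longrightarrow> forces W le R V y b)"
| "forces W le R V x (Box a) = (\<forall>y. W y \<longrightarrow> R x y \<longrightarrow> forces W le R V y a)"

locale lc_model =
  fixes W :: "'w \<Rightarrow> bool" and le R :: "'w \<Rightarrow> 'w \<Rightarrow> bool" and V :: "nat \<Rightarrow> 'w \<Rightarrow> bool"
  assumes finite_worlds: "finite (Collect W)"
    and le_refl: "W x \<Longrightarrow> le x x"
    and le_trans: "W x \<Longrightarrow> W y \<Longrightarrow> W z \<Longrightarrow> le x y \<Longrightarrow> le y z \<Longrightarrow> le x z"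
    and R_trans: "W x \<Longrightarrow> W y \<Longrightarrow> W z \<Longrightarrow> R x y \<Longrightarrow> R y z \<Longrightarrow> R x z"
    and R_imp_le: "W x \<Longrightarrow> W y \<Longrightarrow> R x y \<Longrightarrow> le x y"
    and le_R_trans: "W x \<Longrightarrow> W y \<Longrightarrow> W z \<Longrightarrow> le x y \<Longrightarrow> R y z \<Longrightarrow> R x z"
    and R_irrefl: "W x \<Longrightarrow> \<not> R x x"
    and V_mono: "W x \<Longrightarrow> W y \<Longrightarrow> le x y \<Longrightarrow> V p x \<Longrightarrow> V p y"
begin

abbreviation frc :: "'w \<Rightarrow> form \<Rightarrow> bool" where
  "frc \<equiv> forces W le R V"

lemma forces_mono: "W x \<Longrightarrow> W y \<Longrightarrow> le x y \<Longrightarrow> frc x A \<Longrightarrow> frc y A"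
proof (induction A arbitrary: x y)
  case (Var p)
  then show ?case using V_mono by simp
next
  case (Imp a b)
  then show ?case using le_trans[of x y] by auto
next
  case (Box a)
  then show ?case using le_R_trans[of x y] by auto
qed auto

lemma wf_converse_R: "wf {(y, x). W x \<and> W y \<and> R x y}" (is "wf ?S")
proof (rule finite_acyclic_wf)
  have "?S \<subseteq> Collect W \<times> Collect W" by auto
  then show "finite ?S" using finite_worlds by (meson finite_SigmaI finite_subset)
  have "trans ?S" unfolding trans_def using R_trans by blast
  then show "acyclic ?S" unfolding acyclic_def using R_irrefl by auto
qed

lemma forces_Loeb:
  assumes "W x" and "frc x (Box (Imp (Box A) A))"
  shows "frc x (Box A)"
proof -
  have "W y \<longrightarrow> R x y \<longrightarrow> frc y A" for y
  proof (induction y rule: wf_induct[OF wf_converse_R])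
    case (1 y)
    show ?case
    proof (intro impI)
      assume y: "W y" "R x y"
      have "frc y (Box A)" using 1 y R_trans[OF \<open>W x\<close> y(1)] \<open>W x\<close> by auto
      moreover have "frc y (Imp (Box A) A)" using assms(2) y by auto
      ultimately show "frc y A" using y le_refl by auto
    qed
  qed
  then show ?thesis by simp
qed

lemma forces_ax_S:
  assumes "W x"
  shows "frc x (Imp (Imp A (Imp B C)) (Imp (Imp A B) (Imp A C)))"
  unfolding forces.simps
proof (intro allI impI)
  fix y z u
  assume y: "W y" "le x y" "\<forall>z. W z \<longrightarrow> le y z \<longrightarrow> frc z A \<longrightarrow>
      (\<forall>u. W u \<longrightarrow> le z u \<longrightarrow> frc u B \<longrightarrow> frc u C)"
    and z: "W z" "le y z" "\<forall>u. W u \<longrightarrow> le z u \<longrightarrow> frc u A \<longrightarrow> frc u B"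
    and u: "W u" "le z u" "frc u A"
  have "le y u" using le_trans[of y z u] y z u by blast
  then show "frc u C" using y z u le_refl[of u] by blast
qed

lemma forces_ax_orE:
  assumes "W x"
  shows "frc x (Imp (Imp A C) (Imp (Imp B C) (Imp (Or A B) C)))"
  unfolding forces.simps
proof (intro allI impI)
  fix y z u
  assume y: "W y" "le x y" "\<forall>z. W z \<longrightarrow> le y z \<longrightarrow> frc z A \<longrightarrow> frc z C"
    and z: "W z" "le y z" "\<forall>u. W u \<longrightarrow> le z u \<longrightarrow> frc u B \<longrightarrow> frc u C"
    and u: "W u" "le z u" "frc u A \<or> frc u B"
  have "le y u" using le_trans[of y z u] y z u by blast
  then show "frc u C" using y z u by blast
qed

lemma forces_ax_boxK:
  assumes "W x"
  shows "frc x (Imp (Box (Imp A B)) (Imp (Box A) (Box B)))"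
  unfolding forces.simps
proof (intro allI impI)
  fix y z u
  assume y: "W y" "le x y" "\<forall>u. W u \<longrightarrow> R y u \<longrightarrow> (\<forall>v. W v \<longrightarrow> le u v \<longrightarrow> frc v A \<longrightarrow> frc v B)"
    and z: "W z" "le y z" "\<forall>u. W u \<longrightarrow> R z u \<longrightarrow> frc u A"
    and u: "W u" "R z u"
  have "R y u" using le_R_trans[of y z u] y z u by blast
  then show "frc u B" using y z u le_refl[of u] by blast
qed

theorem forces_LC_prf: "LC_prf A \<Longrightarrow> W x \<Longrightarrow> frc x A"
proof (induction A arbitrary: x rule: LC_prf.induct)
  case ax_S
  then show ?case by (rule forces_ax_S)
next
  case ax_orE
  then show ?case by (rule forces_ax_orE)
next
  case ax_boxK
  then show ?case by (rule forces_ax_boxK)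
next
  case (ax_K A B)
  then show ?case using forces_mono[of _ _ A] by (simp only: forces.simps) blast
next
  case (ax_andI A B)
  then show ?case using forces_mono[of _ _ A] by (simp only: forces.simps) blast
next
  case (ax_box4 A)
  then show ?case using R_trans by (simp only: forces.simps) blast
next
  case (ax_lob A)
  then show ?case using forces_Loeb by (simp only: forces.simps(5)) blast
next
  case (ax_comp A)
  then show ?case using forces_mono[of _ _ A] R_imp_le by (simp only: forces.simps) blast
next
  case (mp A B)
  then show ?case using le_refl by auto
qed auto

end

section \<open>Completeness for finite models\<close>

inductive derivable :: "form set \<Rightarrow> form \<Rightarrow> bool" for G where
  derivable_LC_prf: "LC_prf A \<Longrightarrow> derivable G A"
| derivable_hyp: "A \<in> G \<Longrightarrow> derivable G A"
| derivable_mp: "derivable G (Imp A B) \<Longrightarrow> derivable G A \<Longrightarrow> derivable G B"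

lemma derivable_LC_prf_mp: "LC_prf (Imp A B) \<Longrightarrow> derivable G A \<Longrightarrow> derivable G B"
  by (meson derivable_LC_prf derivable_mp)

lemma derivable_empty_imp_LC_prf: "derivable {} A \<Longrightarrow> LC_prf A"
  by (induction rule: derivable.induct) (auto intro: LC_prf.mp)

lemma LC_prf_Imp_refl: "LC_prf (Imp A A)"
  by (meson ax_K ax_S mp)

lemma derivable_deduction: "derivable (insert A G) B \<Longrightarrow> derivable G (Imp A B)"
proof (induction rule: derivable.induct)
  case (derivable_LC_prf C)
  then show ?case by (meson derivable_LC_prf_mp derivable.derivable_LC_prf ax_K)
next
  case (derivable_hyp C)
  then consider "C = A" | "C \<in> G" by blast
  then show ?case
  proof cases
    case 1
    then show ?thesis using LC_prf_Imp_refl derivable.derivable_LC_prf by blast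
  next
    case 2
    then show ?thesis using derivable.derivable_hyp derivable_LC_prf_mp ax_K by blast
  qed
next
  case (derivable_mp C E)
  then show ?case by (meson derivable_LC_prf_mp derivable.derivable_mp ax_S)
qed

lemma derivable_Box:
  "derivable H F \<Longrightarrow> (\<forall>h\<in>H. derivable G (Box h)) \<Longrightarrow> derivable G (Box F)"
proof (induction rule: derivable.induct)
  case (derivable_LC_prf A)
  then show ?case by (simp add: derivable.derivable_LC_prf nec)
next
  case (derivable_mp A B)
  then show ?case by (meson derivable_LC_prf_mp derivable.derivable_mp ax_boxK)
qed blast

primrec subforms :: "form \<Rightarrow> form set" where
  "subforms (Var p) = {Var p}"
| "subforms Bot = {Bot}"
| "subforms (And a b) = insert (And a b) (subforms a \<union> subforms b)"
| "subforms (Or a b) = insert (Or a b) (subforms a \<union> subforms b)"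
| "subforms (Imp a b) = insert (Imp a b) (subforms a \<union> subforms b)"
| "subforms (Box a) = insert (Box a) (subforms a)"

lemma finite_subforms: "finite (subforms A)"
  by (induction A) auto

lemma subforms_refl: "A \<in> subforms A"
  by (cases A) auto

lemma subforms_immediate:
  "And a b \<in> subforms A \<Longrightarrow> a \<in> subforms A \<and> b \<in> subforms A"
  "Or a b \<in> subforms A \<Longrightarrow> a \<in> subforms A \<and> b \<in> subforms A"
  "Imp a b \<in> subforms A \<Longrightarrow> a \<in> subforms A \<and> b \<in> subforms A"
  "Box a \<in> subforms A \<Longrightarrow> a \<in> subforms A"
  by (induction A) (auto simp: subforms_refl)

text \<open>Prime theories relative to the subformulas of \<open>A\<close> are the worlds of the canonical model;
  restricting to subformulas keeps the model finite.\<close>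

definition prime_theory :: "form \<Rightarrow> form set \<Rightarrow> bool" where
  "prime_theory A G \<longleftrightarrow> G \<subseteq> subforms A \<and> \<not> derivable G Bot
     \<and> (\<forall>B\<in>subforms A. derivable G B \<longrightarrow> B \<in> G)
     \<and> (\<forall>B C. Or B C \<in> G \<longrightarrow> B \<in> G \<or> C \<in> G)"

lemma prime_theory_subforms: "prime_theory A G \<Longrightarrow> G \<subseteq> subforms A"
  unfolding prime_theory_def by blast

lemma prime_theory_closed: "prime_theory A G \<Longrightarrow> B \<in> subforms A \<Longrightarrow> derivable G B \<Longrightarrow> B \<in> G"
  unfolding prime_theory_def by blast

lemma prime_theory_extension:
  assumes "G \<subseteq> subforms A" and "\<not> derivable G B"
  shows "\<exists>H. prime_theory A H \<and> G \<subseteq> H \<and> \<not> derivable H B"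
proof -
  let ?S = "{H. G \<subseteq> H \<and> H \<subseteq> subforms A \<and> \<not> derivable H B}"
  have "?S \<subseteq> Pow (subforms A)" by auto
  then have "finite ?S" using finite_subforms by (meson finite_Pow_iff finite_subset)
  moreover have "G \<in> ?S" using assms by auto
  ultimately obtain H where H: "H \<in> ?S" and max: "\<forall>K\<in>?S. H \<le> K \<longrightarrow> H = K"
    using finite_has_maximal[of ?S] by blast
  have not_B: "\<not> derivable H B" using H by auto
  have maximal: "derivable H (Imp C B)" if "C \<in> subforms A" "C \<notin> H" for C
  proof (rule derivable_deduction, rule ccontr)
    assume "\<not> derivable (insert C H) B"
    then have "insert C H \<in> ?S" using H that(1) by auto
    then show False using max that(2) by blast
  qed
  have closed: "C \<in> H" if "C \<in> subforms A" "derivable H C" for C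
    using maximal[OF that(1)] that(2) not_B derivable_mp by blast
  have "\<not> derivable H Bot" using not_B by (meson derivable_LC_prf_mp ax_efq)
  moreover have "B' \<in> H \<or> C \<in> H" if "Or B' C \<in> H" for B' C
  proof (rule ccontr)
    assume "\<not> (B' \<in> H \<or> C \<in> H)"
    moreover have "B' \<in> subforms A" "C \<in> subforms A"
      using subforms_immediate(2)[of B' C A] that H by auto
    ultimately have "derivable H (Imp B' B)" "derivable H (Imp C B)" using maximal by blast+
    moreover have "derivable H (Or B' C)" using that by (rule derivable_hyp)
    ultimately have "derivable H B" by (meson derivable_LC_prf_mp derivable_mp ax_orE)
    then show False using not_B by blast
  qed
  ultimately show ?thesis unfolding prime_theory_def using H closed by blast
qed

lemma prime_theory_And:
  assumes G: "prime_theory A G" and AB: "And a b \<in> subforms A"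
  shows "And a b \<in> G \<longleftrightarrow> a \<in> G \<and> b \<in> G"
proof
  have "a \<in> subforms A" "b \<in> subforms A" using subforms_immediate(1)[OF AB] by auto
  moreover assume "And a b \<in> G"
  ultimately show "a \<in> G \<and> b \<in> G"
    using prime_theory_closed[OF G] derivable_hyp derivable_LC_prf_mp ax_and1 ax_and2 by metis
next
  assume "a \<in> G \<and> b \<in> G"
  then have "derivable G (And a b)"
    using derivable_hyp derivable_mp derivable_LC_prf_mp[OF ax_andI] by metis
  then show "And a b \<in> G" using prime_theory_closed[OF G AB] by blast
qed

lemma prime_theory_Or:
  assumes G: "prime_theory A G" and AB: "Or a b \<in> subforms A"
  shows "Or a b \<in> G \<longleftrightarrow> a \<in> G \<or> b \<in> G"
proof
  assume "Or a b \<in> G"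
  then show "a \<in> G \<or> b \<in> G" using G unfolding prime_theory_def by blast
next
  assume "a \<in> G \<or> b \<in> G"
  then have "derivable G (Or a b)"
    using derivable_hyp derivable_LC_prf_mp ax_or1 ax_or2 by metis
  then show "Or a b \<in> G" using prime_theory_closed[OF G AB] by blast
qed

lemma prime_theory_Imp_witness:
  assumes G: "prime_theory A G" and "Imp a b \<in> subforms A" and "Imp a b \<notin> G"
  shows "\<exists>H. prime_theory A H \<and> G \<subseteq> H \<and> a \<in> H \<and> b \<notin> H"
proof -
  have "\<not> derivable (insert a G) b"
    using derivable_deduction prime_theory_closed[OF assms(1,2)] assms(3) by blast
  moreover have "insert a G \<subseteq> subforms A"
    using subforms_immediate(3)[OF assms(2)] prime_theory_subforms[OF G] by auto
  ultimately obtain H where "prime_theory A H" "insert a G \<subseteq> H" "\<not> derivable H b"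
    using prime_theory_extension by blast
  then show ?thesis using derivable_hyp by blast
qed

definition canon_R :: "form set \<Rightarrow> form set \<Rightarrow> bool" where
  "canon_R G H \<longleftrightarrow> G \<subset> H \<and> (\<forall>C. Box C \<in> G \<longrightarrow> C \<in> H)"

lemma prime_theory_Box_witness:
  assumes G: "prime_theory A G" and "Box a \<in> subforms A" and "Box a \<notin> G"
  shows "\<exists>H. prime_theory A H \<and> canon_R G H \<and> a \<notin> H"
proof -
  let ?X = "{C. Box C \<in> G}"
  let ?G' = "insert (Box a) (G \<union> ?X)"
  have "\<not> derivable ?G' a"
  proof
    assume "derivable ?G' a"
    then have "derivable (G \<union> ?X) (Imp (Box a) a)" by (rule derivable_deduction)
    \<comment> \<open>By \<open>C \<rightarrow> \<box>C\<close> every hypothesis is boxed in \<open>G\<close>, so Loeb's axiom applies inside \<open>G\<close>.\<close>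
    moreover have "\<forall>h\<in>G \<union> ?X. derivable G (Box h)"
      by (auto intro: derivable_hyp derivable_LC_prf_mp[OF ax_comp])
    ultimately have "derivable G (Box (Imp (Box a) a))" by (rule derivable_Box)
    then have "derivable G (Box a)" by (rule derivable_LC_prf_mp[OF ax_lob])
    then show False using prime_theory_closed[OF G assms(2)] assms(3) by blast
  qed
  moreover have "?X \<subseteq> subforms A"
    using subforms_immediate(4) prime_theory_subforms[OF G] by blast
  then have "?G' \<subseteq> subforms A" using assms(2) prime_theory_subforms[OF G] by auto
  ultimately obtain H where "prime_theory A H" "?G' \<subseteq> H" "\<not> derivable H a"
    using prime_theory_extension by blast
  moreover have "canon_R G H" unfolding canon_R_def using \<open>?G' \<subseteq> H\<close> assms(3) by auto
  ultimately show ?thesis using derivable_hyp by blast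
qed

lemma prime_theory_Imp:
  assumes G: "prime_theory A G" and ab: "Imp a b \<in> subforms A"
  shows "Imp a b \<in> G \<longleftrightarrow> (\<forall>H. prime_theory A H \<longrightarrow> G \<subseteq> H \<longrightarrow> a \<in> H \<longrightarrow> b \<in> H)"
proof
  assume ab_G: "Imp a b \<in> G"
  show "\<forall>H. prime_theory A H \<longrightarrow> G \<subseteq> H \<longrightarrow> a \<in> H \<longrightarrow> b \<in> H"
  proof (intro allI impI)
    fix H assume H: "prime_theory A H" "G \<subseteq> H" "a \<in> H"
    then have "derivable H b" using ab_G by (meson derivable_hyp derivable_mp subsetD)
    then show "b \<in> H" using prime_theory_closed[OF H(1)] subforms_immediate(3)[OF ab] by blast
  qed
qed (use prime_theory_Imp_witness[OF G ab] in blast)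

lemma prime_theory_Box:
  assumes "prime_theory A G" and "Box a \<in> subforms A"
  shows "Box a \<in> G \<longleftrightarrow> (\<forall>H. prime_theory A H \<longrightarrow> canon_R G H \<longrightarrow> a \<in> H)"
  using prime_theory_Box_witness[OF assms] unfolding canon_R_def by blast

lemma canonical_forces_iff:
  "B \<in> subforms A \<Longrightarrow> prime_theory A G \<Longrightarrow>
     forces (prime_theory A) (\<subseteq>) canon_R (\<lambda>p G. Var p \<in> G) G B \<longleftrightarrow> B \<in> G"
proof (induction B arbitrary: G)
  case Bot
  then show ?case unfolding prime_theory_def using derivable_hyp by auto
next
  case (And a b)
  then show ?case using subforms_immediate(1)[OF And.prems(1)] prime_theory_And by simp
next
  case (Or a b)
  then show ?case using subforms_immediate(2)[OF Or.prems(1)] prime_theory_Or by simp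
next
  case (Imp a b)
  then show ?case using subforms_immediate(3)[OF Imp.prems(1)] prime_theory_Imp by auto
next
  case (Box a)
  then show ?case using subforms_immediate(4)[OF Box.prems(1)] prime_theory_Box by auto
qed simp

theorem canonical_countermodel:
  assumes "\<not> LC_prf A"
  shows "\<exists>G. prime_theory A G \<and> \<not> forces (prime_theory A) (\<subseteq>) canon_R (\<lambda>p G. Var p \<in> G) G A"
proof -
  have "\<not> derivable {} A" using assms derivable_empty_imp_LC_prf by blast
  then obtain G where G: "prime_theory A G" "\<not> derivable G A"
    using prime_theory_extension[of "{}" A A] by auto
  then have "A \<notin> G" using derivable_hyp by blast
  then show ?thesis using G(1) canonical_forces_iff[OF subforms_refl G(1)] by blast
qed

lemma le_triangle: "n \<le> triangle n"
  by (induction n) auto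

lemma less_prod_encode: "0 < x \<Longrightarrow> y < prod_encode (x, y)"
  unfolding prod_encode_def using le_triangle[of "x + y"] by simp

lemma enc_less:
  "enc a < enc (And a b)" "enc b < enc (And a b)"
  "enc a < enc (Or a b)" "enc b < enc (Or a b)"
  "enc a < enc (Imp a b)" "enc b < enc (Imp a b)"
  "enc a < enc (Box a)"
proof -
  have "prod_encode (enc a, enc b) < prod_encode (k, prod_encode (enc a, enc b))" if "0 < k" for k
    using less_prod_encode that by blast
  moreover have "enc a \<le> prod_encode (enc a, enc b)" "enc b \<le> prod_encode (enc a, enc b)"
    by (rule le_prod_encode_1, rule le_prod_encode_2)
  ultimately show "enc a < enc (And a b)" "enc b < enc (And a b)"
    "enc a < enc (Or a b)" "enc b < enc (Or a b)"
    "enc a < enc (Imp a b)" "enc b < enc (Imp a b)"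
    by (simp_all, (meson le_less_trans zero_less_numeral)+)
  show "enc a < enc (Box a)" using less_prod_encode[of 5 "enc a"] by simp
qed

lemma inj_enc: "inj enc"
proof (rule injI)
  show "enc a = enc b \<Longrightarrow> a = b" for a b
    by (induction a arbitrary: b; case_tac b; simp)
qed

lemma enc_le_of_subforms: "B \<in> subforms A \<Longrightarrow> enc B \<le> enc A"
proof (induction A)
  case (And a b)
  then show ?case using enc_less(1,2)[where a = a and b = b] by (auto intro: le_trans less_imp_le)
next
  case (Or a b)
  then show ?case using enc_less(3,4)[where a = a and b = b] by (auto intro: le_trans less_imp_le)
next
  case (Imp a b)
  then show ?case using enc_less(5,6)[where a = a and b = b] by (auto intro: le_trans less_imp_le)
next
  case (Box a)
  then show ?case using enc_less(7)[of a] by (auto intro: le_trans less_imp_le)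
qed auto

lemma enc_tag_Box: "fst (prod_decode (enc F)) = 5 \<Longrightarrow> \<exists>C. F = Box C"
  by (cases F) auto

lemma set_decode_bound: "t < 2 ^ n \<Longrightarrow> c \<in> set_decode t \<Longrightarrow> c < n"
proof (rule ccontr)
  assume t: "t < 2 ^ n" "c \<in> set_decode t" "\<not> c < n"
  then have "(2::nat) ^ n \<le> 2 ^ c" by simp
  then have "t < 2 ^ c" using t(1) by linarith
  then have "t div 2 ^ c = 0" by simp
  then show False using t(2) by (simp add: set_decode_def)
qed

lemma set_encode_less_power2: "S \<subseteq> {..<n} \<Longrightarrow> set_encode S < 2 ^ n"
proof -
  assume S: "S \<subseteq> {..<n}"
  have "set_encode S \<le> set_encode {..<n}"
    unfolding set_encode_def using S by (intro sum_mono2) auto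
  also have "set_encode {..<n} = 2 ^ n - 1"
    unfolding set_encode_def using sum_power2[of n] by (simp only: atLeast0LessThan)
  finally have "set_encode S \<le> 2 ^ n - 1" .
  moreover have "(0::nat) < 2 ^ n" by simp
  ultimately show ?thesis by linarith
qed

lemma power2_mult_set_encode: "finite B \<Longrightarrow> 2 ^ p * set_encode B = set_encode ((+) p ` B)"
proof -
  assume "finite B"
  have "set_encode ((+) p ` B) = (\<Sum>i\<in>B. 2 ^ (p + i))"
    unfolding set_encode_def by (subst sum.reindex) (auto simp: inj_on_def)
  also have "\<dots> = 2 ^ p * set_encode B"
    unfolding set_encode_def by (simp add: sum_distrib_left power_add)
  finally show ?thesis by simp
qed

lemma set_decode_add_power2_mult:
  assumes "a < 2 ^ p"
  shows "set_decode (a + 2 ^ p * b) = set_decode a \<union> ((+) p ` set_decode b)"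
proof -
  have "set_decode a \<subseteq> {..<p}" using set_decode_bound[OF assms] by auto
  moreover have "a + 2 ^ p * b = set_encode (set_decode a) + set_encode ((+) p ` set_decode b)"
    using power2_mult_set_encode[of "set_decode b" p] by simp
  ultimately have "a + 2 ^ p * b = set_encode (set_decode a \<union> (+) p ` set_decode b)"
    unfolding set_encode_def by (subst sum.union_disjoint) auto
  then show ?thesis by simp
qed

lemma add_power2_mult_less:
  assumes "a < 2 ^ p" and "b < 2 ^ q"
  shows "a + 2 ^ p * b < (2::nat) ^ (p + q)"
proof -
  have "a + 2 ^ p * b < 2 ^ p * (b + 1)" using assms(1) by simp
  also have "\<dots> \<le> 2 ^ p * 2 ^ q" using assms(2) by (intro mult_le_mono2) simp
  finally show ?thesis by (simp add: power_add)
qed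

section \<open>Coded finite models\<close>

text \<open>A coded world for formulas of code at most \<open>N\<close> is a number below \<open>2 ^ Suc N\<close>, read as the
  set of codes it contains; a coded model is a set \<open>w\<close> of coded worlds, itself coded as a number.
  The relations mirror the canonical model; tag \<open>5\<close> marks the codes of boxed formulas.\<close>

definition code_world :: "nat \<Rightarrow> nat \<Rightarrow> nat \<Rightarrow> bool" where
  "code_world M w t \<longleftrightarrow> t < M \<and> t \<in> set_decode w"

definition code_le :: "nat \<Rightarrow> nat \<Rightarrow> nat \<Rightarrow> bool" where
  "code_le N s t \<longleftrightarrow> (\<forall>c<Suc N. c \<in> set_decode s \<longrightarrow> c \<in> set_decode t)"

definition code_R :: "nat \<Rightarrow> nat \<Rightarrow> nat \<Rightarrow> bool" where
  "code_R N s t \<longleftrightarrow> code_le N s t \<and> s \<noteq> t \<and>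
     (\<forall>c<Suc N. c \<in> set_decode s \<and> fst (prod_decode c) = 5 \<longrightarrow> snd (prod_decode c) \<in> set_decode t)"

definition code_V :: "nat \<Rightarrow> nat \<Rightarrow> bool" where
  "code_V p t \<longleftrightarrow> enc (Var p) \<in> set_decode t"

lemma code_le_antisym:
  assumes "s < 2 ^ Suc N" "t < 2 ^ Suc N" "code_le N s t" "code_le N t s"
  shows "s = t"
proof -
  have "set_decode s = set_decode t"
    using assms set_decode_bound[of s "Suc N"] set_decode_bound[of t "Suc N"]
    unfolding code_le_def by blast
  then show ?thesis by (metis set_decode_inverse)
qed

lemma code_le_code_R_trans:
  assumes "s < 2 ^ Suc N" "t < 2 ^ Suc N" "u < 2 ^ Suc N" "code_le N s t" "code_R N t u"
  shows "code_R N s u"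
proof -
  have "s \<noteq> u" using assms code_le_antisym[of t N u] unfolding code_R_def code_le_def by blast
  then show ?thesis using assms(4,5) unfolding code_R_def code_le_def by blast
qed

lemma lc_model_code: "lc_model (code_world (2 ^ Suc N) w) (code_le N) (code_R N) code_V"
proof
  show "finite (Collect (code_world (2 ^ Suc N) w))"
    by (rule finite_subset[of _ "{..<2 ^ Suc N}"]) (auto simp: code_world_def)
next
  fix x y z
  assume "code_world (2 ^ Suc N) w x" "code_world (2 ^ Suc N) w y" "code_world (2 ^ Suc N) w z"
  then have bounds: "x < 2 ^ Suc N" "y < 2 ^ Suc N" "z < 2 ^ Suc N" by (simp_all add: code_world_def)
  show "code_R N x y \<Longrightarrow> code_R N y z \<Longrightarrow> code_R N x z"
    using code_le_code_R_trans[OF bounds] by (simp add: code_R_def)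
  show "code_le N x y \<Longrightarrow> code_R N y z \<Longrightarrow> code_R N x z"
    using code_le_code_R_trans[OF bounds] .
next
  fix p x y
  assume "code_world (2 ^ Suc N) w x" "code_le N x y" "code_V p x"
  then show "code_V p y"
    using set_decode_bound[of x "Suc N" "enc (Var p)"] unfolding code_world_def code_V_def code_le_def
    by blast
qed (auto simp: code_le_def code_R_def)

definition code_set :: "form set \<Rightarrow> nat" where
  "code_set G = set_encode (enc ` G)"

lemma set_decode_code_set: "finite G \<Longrightarrow> set_decode (code_set G) = enc ` G"
  by (simp add: code_set_def)

lemma code_set_eq_iff: "finite G \<Longrightarrow> finite H \<Longrightarrow> code_set G = code_set H \<longleftrightarrow> G = H"
  using set_decode_code_set inj_enc by (metis inj_image_eq_iff)

lemma code_set_less: "G \<subseteq> subforms A \<Longrightarrow> code_set G < 2 ^ Suc (enc A)"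
  unfolding code_set_def using enc_le_of_subforms
  by (intro set_encode_less_power2) (auto simp: less_Suc_eq_le)

lemma code_V_code_set: "finite G \<Longrightarrow> code_V p (code_set G) \<longleftrightarrow> Var p \<in> G"
  unfolding code_V_def by (simp only: set_decode_code_set inj_image_mem_iff[OF inj_enc])

lemma finite_subset_subforms: "G \<subseteq> subforms A \<Longrightarrow> finite G"
  using finite_subforms finite_subset by blast

lemma code_le_code_set:
  assumes "G \<subseteq> subforms A" and "H \<subseteq> subforms A"
  shows "code_le (enc A) (code_set G) (code_set H) \<longleftrightarrow> G \<subseteq> H"
proof -
  have "code_le (enc A) (code_set G) (code_set H) \<longleftrightarrow> enc ` G \<subseteq> enc ` H"
    using assms enc_le_of_subforms finite_subset_subforms
    by (auto simp: code_le_def set_decode_code_set less_Suc_eq_le)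
  also have "\<dots> \<longleftrightarrow> G \<subseteq> H"
    using inj_enc by (simp add: inj_image_subset_iff)
  finally show ?thesis .
qed

lemma code_R_code_set:
  assumes G: "G \<subseteq> subforms A" and H: "H \<subseteq> subforms A"
  shows "code_R (enc A) (code_set G) (code_set H) \<longleftrightarrow> canon_R G H"
proof -
  have "(\<forall>c<Suc (enc A). c \<in> set_decode (code_set G) \<and> fst (prod_decode c) = 5
          \<longrightarrow> snd (prod_decode c) \<in> set_decode (code_set H))
      \<longleftrightarrow> (\<forall>F\<in>G. fst (prod_decode (enc F)) = 5 \<longrightarrow> snd (prod_decode (enc F)) \<in> enc ` H)"
    using assms enc_le_of_subforms finite_subset_subforms
    by (auto simp: set_decode_code_set less_Suc_eq_le)
  also have "\<dots> \<longleftrightarrow> (\<forall>C. Box C \<in> G \<longrightarrow> enc C \<in> enc ` H)"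
    using enc_tag_Box by fastforce
  also have "\<dots> \<longleftrightarrow> (\<forall>C. Box C \<in> G \<longrightarrow> C \<in> H)"
    by (simp add: inj_image_mem_iff[OF inj_enc])
  finally show ?thesis
    using code_le_code_set[OF assms] code_set_eq_iff finite_subset_subforms[OF G] finite_subset_subforms[OF H]
    unfolding code_R_def canon_R_def by blast
qed

lemma forces_image:
  assumes W: "\<And>y. W' y \<longleftrightarrow> (\<exists>x. W x \<and> y = f x)"
    and le: "\<And>x y. W x \<Longrightarrow> W y \<Longrightarrow> le' (f x) (f y) \<longleftrightarrow> le x y"
    and R: "\<And>x y. W x \<Longrightarrow> W y \<Longrightarrow> R' (f x) (f y) \<longleftrightarrow> R x y"
    and V: "\<And>p x. W x \<Longrightarrow> V' p (f x) \<longleftrightarrow> V p x"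
  shows "W x \<Longrightarrow> forces W' le' R' V' (f x) A \<longleftrightarrow> forces W le R V x A"
proof (induction A arbitrary: x)
  case (Imp a b)
  then show ?case using W le by (auto; metis)
next
  case (Box a)
  then show ?case using W R by (auto; metis)
qed (use V in auto)

theorem coded_countermodel:
  assumes "\<not> LC_prf A"
  shows "\<exists>w<2 ^ 2 ^ Suc (enc A). \<exists>s<2 ^ Suc (enc A). s \<in> set_decode w \<and>
           \<not> forces (code_world (2 ^ Suc (enc A)) w) (code_le (enc A)) (code_R (enc A)) code_V s A"
proof -
  obtain G where G: "prime_theory A G"
    and G_A: "\<not> forces (prime_theory A) (\<subseteq>) canon_R (\<lambda>p G. Var p \<in> G) G A"
    using canonical_countermodel[OF assms] by blast
  have "{G. prime_theory A G} \<subseteq> Pow (subforms A)" using prime_theory_subforms by blast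
  then have "finite {G. prime_theory A G}" using finite_subforms by (meson finite_Pow_iff finite_subset)
  define w where "w = set_encode (code_set ` {G. prime_theory A G})"
  then have worlds: "set_decode w = code_set ` {G. prime_theory A G}"
    using \<open>finite {G. prime_theory A G}\<close> by simp
  have w_less: "w < 2 ^ 2 ^ Suc (enc A)"
    unfolding w_def using code_set_less[OF prime_theory_subforms]
    by (intro set_encode_less_power2) (auto simp del: power_Suc)
  have "forces (code_world (2 ^ Suc (enc A)) w) (code_le (enc A)) (code_R (enc A)) code_V (code_set G) A
      \<longleftrightarrow> forces (prime_theory A) (\<subseteq>) canon_R (\<lambda>p G. Var p \<in> G) G A"
  proof (rule forces_image[where f = code_set])
    show "code_world (2 ^ Suc (enc A)) w y \<longleftrightarrow> (\<exists>H. prime_theory A H \<and> y = code_set H)" for y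
      using worlds code_set_less prime_theory_subforms by (auto simp: code_world_def)
  qed (simp_all add: G prime_theory_subforms code_le_code_set code_R_code_set
         code_V_code_set[OF finite_subset_subforms[OF prime_theory_subforms]])
  then show ?thesis
    using G G_A w_less worlds code_set_less[OF prime_theory_subforms[OF G]] by blast
qed

section \<open>Evaluation tables\<close>

text \<open>Row \<open>c\<close> of a table (bits \<open>c * M\<close> to \<open>c * M + M - 1\<close>) records the coded worlds \<open>s < M\<close>
  forcing the formula with code \<open>c\<close>. Codes of immediate subformulas are smaller, so each row is
  computed from the earlier ones; codes that do not come from a formula get junk rows.\<close>

definition table_entry :: "nat \<Rightarrow> nat \<Rightarrow> nat \<Rightarrow> nat \<Rightarrow> nat \<Rightarrow> nat \<Rightarrow> bool" where
  "table_entry N M w c s tab = (let a = fst (prod_decode c); b = snd (prod_decode c);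
      x = fst (prod_decode b); y = snd (prod_decode b) in
    if a = 0 then c \<in> set_decode s
    else if a = 2 then x * M + s \<in> set_decode tab \<and> y * M + s \<in> set_decode tab
    else if a = 3 then x * M + s \<in> set_decode tab \<or> y * M + s \<in> set_decode tab
    else if a = 4 then (\<forall>t<M. t \<in> set_decode w \<and> code_le N s t \<and> x * M + t \<in> set_decode tab
                                \<longrightarrow> y * M + t \<in> set_decode tab)
    else if a = 5 then (\<forall>t<M. t \<in> set_decode w \<and> code_R N s t \<longrightarrow> b * M + t \<in> set_decode tab)
    else False)"

definition table_row :: "nat \<Rightarrow> nat \<Rightarrow> nat \<Rightarrow> nat \<Rightarrow> nat \<Rightarrow> nat" where
  "table_row N M w c tab = set_encode {s. s < M \<and> table_entry N M w c s tab}"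

definition table :: "nat \<Rightarrow> nat \<Rightarrow> nat \<Rightarrow> nat \<Rightarrow> nat" where
  "table N M w c = rec_nat 0 (\<lambda>c tab. tab + 2 ^ (c * M) * table_row N M w c tab) c"

lemma table_0 [simp]: "table N M w 0 = 0"
  by (simp add: table_def)

lemma table_Suc [simp]:
  "table N M w (Suc c) = table N M w c + 2 ^ (c * M) * table_row N M w c (table N M w c)"
  by (simp add: table_def)

lemma table_row_less: "table_row N M w c tab < 2 ^ M"
  unfolding table_row_def by (rule set_encode_less_power2) auto

lemma set_decode_table_row:
  "set_decode (table_row N M w c tab) = {s. s < M \<and> table_entry N M w c s tab}"
  unfolding table_row_def by (rule set_encode_inverse) auto

lemma table_less: "table N M w c < 2 ^ (c * M)"
proof (induction c)
  case (Suc c)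
  then show ?case using add_power2_mult_less[OF Suc table_row_less] by (simp add: add.commute)
qed simp

lemma mem_table_iff:
  "x < c \<Longrightarrow> s < M \<Longrightarrow> x * M + s \<in> set_decode (table N M w c) \<longleftrightarrow> table_entry N M w x s (table N M w x)"
proof (induction c)
  case (Suc c)
  let ?t = "table N M w c" and ?row = "table_row N M w c (table N M w c)"
  have decode: "set_decode (table N M w (Suc c)) = set_decode ?t \<union> ((+) (c * M) ` set_decode ?row)"
    using set_decode_add_power2_mult[OF table_less] by simp
  show ?case
  proof (cases "x < c")
    case True
    have "x * M + s < c * M"
      using mult_le_mono1[of "Suc x" c M] True Suc.prems(2) by simp
    then show ?thesis using Suc True decode by auto
  next
    case False
    then have "x = c" using Suc.prems(1) by simp
    moreover have "c * M + s \<notin> set_decode ?t" using set_decode_bound[OF table_less] by blast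
    ultimately show ?thesis using decode Suc.prems(2) set_decode_table_row by auto
  qed
qed simp

lemma table_entry_iff_forces:
  "s < M \<Longrightarrow> table_entry N M w (enc B) s (table N M w (enc B))
     \<longleftrightarrow> forces (code_world M w) (code_le N) (code_R N) code_V s B"
proof (induction B arbitrary: s)
  case (And a b)
  then show ?case
    using mem_table_iff[OF enc_less(1)] mem_table_iff[OF enc_less(2)] by (simp add: table_entry_def)
next
  case (Or a b)
  then show ?case
    using mem_table_iff[OF enc_less(3)] mem_table_iff[OF enc_less(4)] by (simp add: table_entry_def)
next
  case (Imp a b)
  then show ?case
    using mem_table_iff[OF enc_less(5)] mem_table_iff[OF enc_less(6)]
    by (auto simp: table_entry_def code_world_def)
next
  case (Box a)
  then show ?case
    using mem_table_iff[OF enc_less(7)] by (auto simp: table_entry_def code_world_def)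
qed (simp_all add: table_entry_def code_V_def)

definition coded_valid :: "nat \<Rightarrow> bool" where
  "coded_valid k \<longleftrightarrow> (\<forall>w<2 ^ 2 ^ Suc k. \<forall>s<2 ^ Suc k. s \<in> set_decode w \<longrightarrow>
      k * 2 ^ Suc k + s \<in> set_decode (table k (2 ^ Suc k) w (Suc k)))"

lemma coded_valid_enc_iff_forces:
  "coded_valid (enc A) \<longleftrightarrow> (\<forall>w<2 ^ 2 ^ Suc (enc A). \<forall>s<2 ^ Suc (enc A). s \<in> set_decode w \<longrightarrow>
      forces (code_world (2 ^ Suc (enc A)) w) (code_le (enc A)) (code_R (enc A)) code_V s A)"
  unfolding coded_valid_def using mem_table_iff[of "enc A" "Suc (enc A)"] table_entry_iff_forces
  by simp

theorem coded_valid_enc_iff_LC_prf: "coded_valid (enc A) \<longleftrightarrow> LC_prf A"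
proof
  assume "LC_prf A"
  then show "coded_valid (enc A)"
    unfolding coded_valid_enc_iff_forces
    using lc_model.forces_LC_prf[OF lc_model_code] by (auto simp: code_world_def)
next
  assume "coded_valid (enc A)"
  then show "LC_prf A"
    unfolding coded_valid_enc_iff_forces using coded_countermodel by blast
qed

section \<open>Primitive recursive expressions\<close>

definition computable :: "nat \<Rightarrow> (nat list \<Rightarrow> nat) \<Rightarrow> bool" where
  "computable n f \<longleftrightarrow> (\<exists>r. \<forall>xs. length xs = n \<longrightarrow> rec_eval r xs (f xs))"

lemma computable_cong: "computable n f \<Longrightarrow> (\<And>xs. length xs = n \<Longrightarrow> f xs = g xs) \<Longrightarrow> computable n g"
  unfolding computable_def by metis

lemma computable_proj: "i < n \<Longrightarrow> computable n (\<lambda>xs. xs ! i)"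
  unfolding computable_def by (rule exI[of _ "Proj i"]) (auto intro: rec_eval.intros)

fun const_recf :: "nat \<Rightarrow> recf" where
  "const_recf 0 = Zero"
| "const_recf (Suc c) = Comp Succ [const_recf c]"

lemma rec_eval_const_recf: "rec_eval (const_recf c) xs c"
proof (induction c)
  case 0 then show ?case by (auto intro: rec_eval.intros)
next
  case (Suc c)
  show ?case unfolding const_recf.simps
    by (rule ev_comp[where ys="[c]"]) (use Suc in \<open>auto intro: rec_eval.intros\<close>)
qed

lemma computable_const: "computable n (\<lambda>_. c)"
  unfolding computable_def using rec_eval_const_recf by blast

lemma computable_compose:
  assumes f: "computable (length gs) f" and gs: "\<forall>g\<in>set gs. computable n g"
  shows "computable n (\<lambda>xs. f (map (\<lambda>g. g xs) gs))"
proof -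
  from f obtain rf where rf: "\<forall>ys. length ys = length gs \<longrightarrow> rec_eval rf ys (f ys)"
    unfolding computable_def by blast
  define prog where "prog g = (SOME r. \<forall>xs. length xs = n \<longrightarrow> rec_eval r xs (g xs))" for g
  have prog: "rec_eval (prog g) xs (g xs)" if "g \<in> set gs" "length xs = n" for g xs
    using someI_ex[of "\<lambda>r. \<forall>xs. length xs = n \<longrightarrow> rec_eval r xs (g xs)"] gs that
    unfolding prog_def computable_def by blast
  show ?thesis unfolding computable_def
  proof (intro exI allI impI)
    fix xs :: "nat list" assume "length xs = n"
    show "rec_eval (Comp rf (map prog gs)) xs (f (map (\<lambda>g. g xs) gs))"
      by (rule ev_comp[where ys="map (\<lambda>g. g xs) gs"]) (use prog rf \<open>length xs = n\<close> in auto)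
  qed
qed

lemma computable_rec_nat:
  assumes f: "computable n f0" and g: "computable (Suc (Suc n)) g"
  shows "computable (Suc n) (\<lambda>ys. rec_nat (f0 (tl ys)) (\<lambda>m acc. g (m # acc # tl ys)) (hd ys))"
proof -
  from f obtain rf where rf: "\<forall>ys. length ys = n \<longrightarrow> rec_eval rf ys (f0 ys)"
    unfolding computable_def by blast
  from g obtain rg where rg: "\<forall>ys. length ys = Suc (Suc n) \<longrightarrow> rec_eval rg ys (g ys)"
    unfolding computable_def by blast
  have *: "rec_eval (Prim rf rg) (m # xs) (rec_nat (f0 xs) (\<lambda>m acc. g (m # acc # xs)) m)"
    if "length xs = n" for m xs
  proof (induction m)
    case 0 then show ?case using rf that by (auto intro: ev_prim0)
  next
    case (Suc m) then show ?case using rg that by (auto intro: ev_primS)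
  qed
  show ?thesis unfolding computable_def
  proof (intro exI allI impI)
    fix ys :: "nat list" assume "length ys = Suc n"
    then obtain m xs where "ys = m # xs" "length xs = n" by (cases ys) auto
    then show "rec_eval (Prim rf rg) ys (rec_nat (f0 (tl ys)) (\<lambda>m acc. g (m # acc # tl ys)) (hd ys))"
      using * by simp
  qed
qed

lemma computable_Suc: "computable (Suc 0) (\<lambda>xs. Suc (xs ! 0))"
proof -
  have "\<forall>xs. length xs = Suc 0 \<longrightarrow> rec_eval Succ xs (Suc (xs ! 0))"
  proof (intro allI impI)
    fix xs :: "nat list" assume "length xs = Suc 0"
    then obtain x where "xs = [x]" by (cases xs) auto
    then show "rec_eval Succ xs (Suc (xs ! 0))" by (auto intro: ev_succ)
  qed
  then show ?thesis unfolding computable_def by blast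
qed

lemma computable_plus: "computable 2 (\<lambda>xs. xs ! 0 + xs ! 1)"
proof -
  have "computable (Suc 1)
      (\<lambda>ys. rec_nat ((\<lambda>xs. xs ! 0) (tl ys)) (\<lambda>m acc. (\<lambda>zs. Suc (zs ! 1)) (m # acc # tl ys)) (hd ys))"
  proof (rule computable_rec_nat)
    show "computable 1 (\<lambda>xs. xs ! 0)" by (rule computable_proj) simp
    have "computable 3 (\<lambda>xs. (\<lambda>zs. Suc (zs!0)) (map (\<lambda>g. g xs) [\<lambda>xs. xs!1]))"
      by (rule computable_compose) (auto intro: computable_proj computable_Suc)
    then show "computable (Suc (Suc 1)) (\<lambda>zs. Suc (zs ! 1))" by (simp add: numeral_eq_Suc)
  qed
  moreover have "rec_nat (xs!0) (\<lambda>m acc. Suc acc) m = m + xs!0" for m xs by (induction m) auto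
  ultimately have "computable (Suc 1) (\<lambda>xs. xs ! 0 + xs ! 1)"
    by (elim computable_cong) (auto simp: length_Suc_conv)
  then show ?thesis by (simp add: numeral_eq_Suc)
qed

text \<open>In
  \<open>Rec b z s\<close> the step \<open>s\<close> sees the counter at \<open>Arg 0\<close>, the accumulator at \<open>Arg 1\<close> and the
  outer arguments shifted by two.\<close>

datatype pexp = Arg nat | Const nat | Plus pexp pexp | Rec pexp pexp pexp

primrec peval :: "pexp \<Rightarrow> nat list \<Rightarrow> nat" where
  "peval (Arg i) env = (if i < length env then env ! i else 0)"
| "peval (Const c) env = c"
| "peval (Plus a b) env = peval a env + peval b env"
| "peval (Rec b z s) env = rec_nat (peval z env) (\<lambda>m acc. peval s (m # acc # env)) (peval b env)"

primrec wf_pexp :: "nat \<Rightarrow> pexp \<Rightarrow> bool" where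
  "wf_pexp n (Arg i) = (i < n)"
| "wf_pexp n (Const c) = True"
| "wf_pexp n (Plus a b) = (wf_pexp n a \<and> wf_pexp n b)"
| "wf_pexp n (Rec b z s) = (wf_pexp n b \<and> wf_pexp n z \<and> wf_pexp (Suc (Suc n)) s)"

primrec shift_pexp :: "nat \<Rightarrow> pexp \<Rightarrow> pexp" where
  "shift_pexp k (Arg i) = (if i < k then Arg i else Arg (Suc i))"
| "shift_pexp k (Const c) = Const c"
| "shift_pexp k (Plus a b) = Plus (shift_pexp k a) (shift_pexp k b)"
| "shift_pexp k (Rec b z s) = Rec (shift_pexp k b) (shift_pexp k z) (shift_pexp (Suc (Suc k)) s)"

lemma peval_shift:
  "k \<le> length env \<Longrightarrow> peval (shift_pexp k e) (take k env @ x # drop k env) = peval e env"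
proof (induction e arbitrary: k env)
  case (Arg i)
  then show ?case
    by (auto simp: nth_append min_def nth_Cons' split: if_splits)
next
  case (Rec b z s)
  have "peval (shift_pexp (Suc (Suc k)) s) (m # acc # take k env @ x # drop k env)
      = peval s (m # acc # env)" for m acc
    using Rec.IH(3)[of "Suc (Suc k)" "m # acc # env"] Rec.prems by simp
  then show ?case using Rec by simp
qed auto

lemma peval_shift0 [simp]: "peval (shift_pexp 0 e) (x # env) = peval e env"
  using peval_shift[of 0 env e x] by simp

lemma peval_shift1 [simp]: "peval (shift_pexp (Suc 0) e) (y # x # env) = peval e (y # env)"
  using peval_shift[of 1 "y # env" e x] by simp

lemma peval_Arg0 [simp]: "peval (Arg 0) (x # env) = x" by simp

lemma peval_Arg1 [simp]: "peval (Arg 1) (y # x # env) = x" by simp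

lemma wf_pexp_shift [simp]: "k \<le> n \<Longrightarrow> wf_pexp (Suc n) (shift_pexp k e) = wf_pexp n e"
  by (induction e arbitrary: k n) auto

lemma computable_peval: "wf_pexp n e \<Longrightarrow> computable n (peval e)"
proof (induction e arbitrary: n)
  case (Arg i) then show ?case by (auto intro: computable_cong[OF computable_proj])
next
  case (Const c) then show ?case by (simp add: computable_const)
next
  case (Plus a b)
  then have "computable n (\<lambda>xs. (\<lambda>ys. ys!0 + ys!1) (map (\<lambda>g. g xs) [peval a, peval b]))"
    by (intro computable_compose) (auto intro: computable_plus[unfolded numeral_2_eq_2 One_nat_def])
  then show ?case by simp
next
  case (Rec b z s)
  then have P: "computable (Suc n)
      (\<lambda>ys. rec_nat (peval z (tl ys)) (\<lambda>m acc. peval s (m # acc # tl ys)) (hd ys))"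
    by (intro computable_rec_nat) auto
  have "computable n (\<lambda>xs. (\<lambda>ys. rec_nat (peval z (tl ys)) (\<lambda>m acc. peval s (m # acc # tl ys)) (hd ys))
             (map (\<lambda>g. g xs) (peval b # map (\<lambda>i xs. xs ! i) [0..<n])))"
    by (rule computable_compose) (use P Rec in \<open>auto intro: computable_proj\<close>)
  then show ?case
    by (rule computable_cong) (simp add: o_def, metis map_nth)
qed

definition EPred :: "pexp \<Rightarrow> pexp" where
  "EPred e = Rec e (Const 0) (Arg 0)"

definition ESub :: "pexp \<Rightarrow> pexp \<Rightarrow> pexp" where
  "ESub a b = Rec b a (EPred (Arg 1))"

definition EMul :: "pexp \<Rightarrow> pexp \<Rightarrow> pexp" where
  "EMul a b = Rec a (Const 0) (Plus (Arg 1) (shift_pexp 0 (shift_pexp 0 b)))"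

definition EPow2 :: "pexp \<Rightarrow> pexp" where
  "EPow2 e = Rec e (Const 1) (EMul (Const 2) (Arg 1))"

definition ESum :: "pexp \<Rightarrow> pexp \<Rightarrow> pexp" where
  "ESum b t = Rec b (Const 0) (Plus (Arg 1) (shift_pexp 1 t))"

definition ELet :: "pexp \<Rightarrow> pexp \<Rightarrow> pexp" where
  "ELet e body = Rec (Const 1) e (shift_pexp 0 body)"

definition ENot :: "pexp \<Rightarrow> pexp" where
  "ENot e = ESub (Const 1) e"

definition ESg :: "pexp \<Rightarrow> pexp" where
  "ESg e = ENot (ENot e)"

definition EConj :: "pexp \<Rightarrow> pexp \<Rightarrow> pexp" where
  "EConj a b = ESg (EMul a b)"

definition EImp :: "pexp \<Rightarrow> pexp \<Rightarrow> pexp" where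
  "EImp a b = ENot (EMul a (ENot b))"

definition ELe :: "pexp \<Rightarrow> pexp \<Rightarrow> pexp" where
  "ELe a b = ENot (ESub a b)"

definition EEq :: "pexp \<Rightarrow> pexp \<Rightarrow> pexp" where
  "EEq a b = EConj (ELe a b) (ELe b a)"

definition EForall :: "pexp \<Rightarrow> pexp \<Rightarrow> pexp" where
  "EForall b t = ENot (ESum b (ENot t))"

text \<open>\<open>EDiv a d\<close> counts the \<open>j < a\<close> with \<open>d * (j + 1) \<le> a\<close>; \<open>EFst\<close> and \<open>ESnd\<close>
  search all pairs below \<open>c + 1\<close>, which suffices because \<open>prod_encode\<close> dominates its arguments.\<close>

definition EDiv :: "pexp \<Rightarrow> pexp \<Rightarrow> pexp" where
  "EDiv a d = ESum a (ELe (EMul (shift_pexp 0 d) (Plus (Arg 0) (Const 1))) (shift_pexp 0 a))"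

definition EMem :: "pexp \<Rightarrow> pexp \<Rightarrow> pexp" where
  "EMem x s = ELet (EDiv s (EPow2 x)) (ENot (EEq (EMul (Const 2) (EDiv (Arg 0) (Const 2))) (Arg 0)))"

definition ETriangle :: "pexp \<Rightarrow> pexp" where
  "ETriangle e = ESum (Plus e (Const 1)) (Arg 0)"

definition EPair :: "pexp \<Rightarrow> pexp \<Rightarrow> pexp" where
  "EPair a b = Plus (ETriangle (Plus a b)) a"

definition EFst :: "pexp \<Rightarrow> pexp" where
  "EFst c = ESum (Plus c (Const 1)) (ESum (Plus (shift_pexp 0 c) (Const 1))
    (EMul (Arg 1) (EEq (EPair (Arg 1) (Arg 0)) (shift_pexp 0 (shift_pexp 0 c)))))"

definition ESnd :: "pexp \<Rightarrow> pexp" where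
  "ESnd c = ESum (Plus c (Const 1)) (ESum (Plus (shift_pexp 0 c) (Const 1))
    (EMul (Arg 0) (EEq (EPair (Arg 1) (Arg 0)) (shift_pexp 0 (shift_pexp 0 c)))))"

lemma wf_pexp_macros [simp]:
  "wf_pexp n (EPred e) = wf_pexp n e"
  "wf_pexp n (ESub a b) = (wf_pexp n a \<and> wf_pexp n b)"
  "wf_pexp n (EMul a b) = (wf_pexp n a \<and> wf_pexp n b)"
  "wf_pexp n (EPow2 a) = wf_pexp n a"
  "wf_pexp n (ESum b t) = (wf_pexp n b \<and> wf_pexp (Suc n) t)"
  "wf_pexp n (ELet b t) = (wf_pexp n b \<and> wf_pexp (Suc n) t)"
  "wf_pexp n (ENot a) = wf_pexp n a"
  "wf_pexp n (ESg a) = wf_pexp n a"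
  "wf_pexp n (EConj a b) = (wf_pexp n a \<and> wf_pexp n b)"
  "wf_pexp n (EImp a b) = (wf_pexp n a \<and> wf_pexp n b)"
  "wf_pexp n (ELe a b) = (wf_pexp n a \<and> wf_pexp n b)"
  "wf_pexp n (EEq a b) = (wf_pexp n a \<and> wf_pexp n b)"
  "wf_pexp n (EForall b t) = (wf_pexp n b \<and> wf_pexp (Suc n) t)"
  "wf_pexp n (EDiv a b) = (wf_pexp n a \<and> wf_pexp n b)"
  "wf_pexp n (EMem a b) = (wf_pexp n a \<and> wf_pexp n b)"
  "wf_pexp n (ETriangle a) = wf_pexp n a"
  "wf_pexp n (EPair a b) = (wf_pexp n a \<and> wf_pexp n b)"
  "wf_pexp n (EFst a) = wf_pexp n a"
  "wf_pexp n (ESnd a) = wf_pexp n a"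
  by (auto simp: EPred_def ESub_def EMul_def EPow2_def ESum_def ELet_def ENot_def ESg_def
      EConj_def EImp_def ELe_def EEq_def EForall_def EDiv_def EMem_def ETriangle_def EPair_def
      EFst_def ESnd_def)

lemma peval_EPred [simp]: "peval (EPred e) env = peval e env - 1"
proof -
  have "rec_nat 0 (\<lambda>m acc. m) k = k - 1" for k :: nat by (cases k) auto
  then show ?thesis by (simp add: EPred_def)
qed

lemma peval_ESub [simp]: "peval (ESub a b) env = peval a env - peval b env"
proof -
  have "rec_nat x (\<lambda>m acc. acc - 1) k = x - k" for x k :: nat by (induction k) auto
  then show ?thesis by (auto simp add: ESub_def)
qed

lemma peval_EMul [simp]: "peval (EMul a b) env = peval a env * peval b env"
proof -
  have "rec_nat 0 (\<lambda>m acc. acc + y) k = k * y" for y k :: nat by (induction k) auto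
  then show ?thesis by (simp add: EMul_def)
qed

lemma peval_EPow2 [simp]: "peval (EPow2 a) env = 2 ^ peval a env"
proof -
  have "rec_nat 1 (\<lambda>m acc. 2 * acc) k = (2::nat) ^ k" for k :: nat by (induction k) auto
  then show ?thesis by (simp add: EPow2_def)
qed

lemma peval_ESum [simp]: "peval (ESum b t) env = (\<Sum>i<peval b env. peval t (i # env))"
proof -
  have "rec_nat 0 (\<lambda>m acc. acc + peval t (m # env)) k = (\<Sum>i<k. peval t (i # env))" for k
    by (induction k) auto
  then show ?thesis by (simp add: ESum_def)
qed

lemma peval_ELet [simp]: "peval (ELet b t) env = peval t (peval b env # env)"
  by (simp add: ELet_def)

lemma peval_ENot [simp]: "peval (ENot a) env = of_bool (peval a env = 0)" by (simp add: ENot_def)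
lemma peval_ESg [simp]: "peval (ESg a) env = of_bool (peval a env \<noteq> 0)" by (simp add: ESg_def)
lemma peval_EConj [simp]: "peval (EConj a b) env = of_bool (peval a env \<noteq> 0 \<and> peval b env \<noteq> 0)"
  by (simp add: EConj_def)
lemma peval_EImp [simp]: "peval (EImp a b) env = of_bool (peval a env \<noteq> 0 \<longrightarrow> peval b env \<noteq> 0)"
  by (simp add: EImp_def)
lemma peval_ELe [simp]: "peval (ELe a b) env = of_bool (peval a env \<le> peval b env)"
  by (simp add: ELe_def)
lemma peval_EEq [simp]: "peval (EEq a b) env = of_bool (peval a env = peval b env)"
  by (auto simp add: EEq_def)
lemma peval_EForall [simp]:
  "peval (EForall b t) env = of_bool (\<forall>i<peval b env. peval t (i # env) \<noteq> 0)"
proof -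
  have "(\<Sum>i<peval b env. of_bool (peval t (i # env) = 0)) = (0::nat)
      \<longleftrightarrow> (\<forall>i<peval b env. peval t (i # env) \<noteq> 0)"
    by (subst sum_eq_0_iff) auto
  then show ?thesis by (simp only: EForall_def peval_ENot peval_ESum)
qed

lemma sum_mult_le_eq_div: "d > 0 \<Longrightarrow> (\<Sum>j<s. of_bool (d * (j + 1) \<le> s)) = (s div d :: nat)"
proof -
  assume d: "d > 0"
  have iff: "j < s div d \<longleftrightarrow> d * (j + 1) \<le> s" for j
    using div_less_iff_less_mult[OF d, of s "j+1"] by (auto simp: mult.commute)
  have "s div d \<le> s" by (rule div_le_dividend)
  then have e: "{..<s} \<inter> {j. d * (j + 1) \<le> s} = {..<s div d}" using iff
  proof (intro set_eqI)
    fix x show "x \<in> {..<s} \<inter> {j. d * (j + 1) \<le> s} \<longleftrightarrow> x \<in> {..<s div d}"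
      using iff[of x] \<open>s div d \<le> s\<close> by (auto intro: less_le_trans)
  qed
  have "(\<Sum>j<s. of_bool (d * (j + 1) \<le> s)) = card ({..<s} \<inter> {j. d * (j + 1) \<le> s})"
    by simp
  then show ?thesis by (simp only: e card_lessThan)
qed

lemma peval_EDiv [simp]: "peval d env > 0 \<Longrightarrow> peval (EDiv a d) env = peval a env div peval d env"
  unfolding EDiv_def
  by (simp only: peval_ESum peval_ELe peval_EMul peval_shift0 peval_Arg0 peval.simps(2,3)
      sum_mult_le_eq_div)

lemma double_half_neq_iff_odd: "(2 * (q div 2) \<noteq> q) = odd (q::nat)" by presburger

lemma peval_EMem [simp]: "peval (EMem x s) env = of_bool (peval x env \<in> set_decode (peval s env))"
  unfolding EMem_def
  by (simp only: peval_ELet peval_ENot peval_EEq peval_EMul peval_EDiv peval_EPow2 peval.simps(2)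
      peval_Arg0 zero_less_numeral zero_less_power double_half_neq_iff_odd set_decode_def
      mem_Collect_eq of_bool_eq_0_iff)

lemma peval_ETriangle [simp]: "peval (ETriangle a) env = triangle (peval a env)"
proof -
  have "(\<Sum>i<Suc k. i) = triangle k" for k by (induction k) auto
  then show ?thesis by (simp add: ETriangle_def)
qed

lemma peval_EPair [simp]: "peval (EPair a b) env = prod_encode (peval a env, peval b env)"
  by (simp add: EPair_def prod_encode_def)

lemma sum_prod_encode_eq:
  fixes f :: "nat \<Rightarrow> nat \<Rightarrow> nat"
  shows "(\<Sum>a<Suc c. \<Sum>b<Suc c. f a b * of_bool (prod_encode (a, b) = c))
           = f (fst (prod_decode c)) (snd (prod_decode c))"
proof -
  obtain x y where xy: "prod_decode c = (x, y)" by fastforce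
  then have c: "c = prod_encode (x, y)" by (metis prod_decode_inverse)
  have eq: "prod_encode (a, b) = c \<longleftrightarrow> a = x \<and> b = y" for a b using c by simp
  have "x < Suc c" "y < Suc c"
    using c le_prod_encode_1 le_prod_encode_2 by (simp_all add: less_Suc_eq_le)
  then have inner:
    "(\<Sum>b<Suc c. f a b * of_bool (prod_encode (a, b) = c)) = (if a = x then f a y else 0)" for a
  proof (cases "a = x")
    case True
    have "(\<Sum>b<Suc c. f a b * of_bool (prod_encode (a, b) = c))
        = (\<Sum>b<Suc c. if b = y then f a b else 0)"
      by (rule sum.cong) (auto simp: eq True)
    also have "\<dots> = f a y" using \<open>y < Suc c\<close> by simp
    finally show ?thesis using True by simp
  qed (simp add: eq)
  have "(\<Sum>a<Suc c. \<Sum>b<Suc c. f a b * of_bool (prod_encode (a, b) = c))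
      = (\<Sum>a<Suc c. if a = x then f a y else 0)"
    by (simp only: inner)
  also have "\<dots> = f x y" using \<open>x < Suc c\<close> by simp
  finally show ?thesis by (simp add: xy)
qed

lemma peval_EFst [simp]: "peval (EFst c) env = fst (prod_decode (peval c env))"
  unfolding EFst_def
  using sum_prod_encode_eq[of "\<lambda>a b. a" "peval c env"]
  by (simp only: peval_ESum peval.simps(2,3) peval_shift0 peval_Arg0 peval_Arg1 peval_EMul peval_EEq
      peval_EPair Suc_eq_plus1)

lemma peval_ESnd [simp]: "peval (ESnd c) env = snd (prod_decode (peval c env))"
  unfolding ESnd_def
  using sum_prod_encode_eq[of "\<lambda>a b. b" "peval c env"]
  by (simp only: peval_ESum peval.simps(2,3) peval_shift0 peval_Arg0 peval_Arg1 peval_EMul peval_EEq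
      peval_EPair Suc_eq_plus1)

lemma decidable_formsI:
  assumes "computable 1 f" and "\<And>A. f [enc A] = of_bool (P A)"
  shows "decidable_forms P"
proof -
  obtain r where r: "\<forall>xs. length xs = 1 \<longrightarrow> rec_eval r xs (f xs)"
    using assms(1) unfolding computable_def by blast
  have "rec_eval r [enc A] (if P A then 1 else 0)" for A
    using r[rule_format, of "[enc A]"] assms(2)[of A] by (cases "P A") simp_all
  then show ?thesis unfolding decidable_forms_def by blast
qed

section \<open>The decision procedure as a primitive recursive program\<close>

definition ECodeLe :: "pexp \<Rightarrow> pexp \<Rightarrow> pexp \<Rightarrow> pexp" where
  "ECodeLe s t N =
     EForall (Plus N (Const 1)) (EImp (EMem (Arg 0) (shift_pexp 0 s)) (EMem (Arg 0) (shift_pexp 0 t)))"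

definition ECodeR :: "pexp \<Rightarrow> pexp \<Rightarrow> pexp \<Rightarrow> pexp" where
  "ECodeR s t N =
     EConj (ECodeLe s t N) (EConj (ENot (EEq s t))
       (EForall (Plus N (Const 1))
         (EImp (EConj (EMem (Arg 0) (shift_pexp 0 s)) (EEq (EFst (Arg 0)) (Const 5)))
           (EMem (ESnd (Arg 0)) (shift_pexp 0 t)))))"

lemma wf_pexp_ECodeLe [simp]:
  "wf_pexp n (ECodeLe s t N) \<longleftrightarrow> wf_pexp n s \<and> wf_pexp n t \<and> wf_pexp n N"
  by (auto simp: ECodeLe_def)

lemma wf_pexp_ECodeR [simp]:
  "wf_pexp n (ECodeR s t N) \<longleftrightarrow> wf_pexp n s \<and> wf_pexp n t \<and> wf_pexp n N"
  by (auto simp: ECodeR_def)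

lemma peval_ECodeLe [simp]:
  "peval (ECodeLe s t N) env = of_bool (code_le (peval N env) (peval s env) (peval t env))"
  by (simp add: ECodeLe_def code_le_def)

lemma peval_ECodeR [simp]:
  "peval (ECodeR s t N) env = of_bool (code_R (peval N env) (peval s env) (peval t env))"
  by (simp add: ECodeR_def code_R_def) blast

text \<open>With \<open>c = prod_encode (a, b)\<close> and \<open>b = prod_encode (x, y)\<close>, the body of \<open>ETableEntry\<close> is
  evaluated in the environment \<open>y, x, b, a, s, c, tab, w, M, N\<close>.\<close>

definition ETableEntryBody :: pexp where
  "ETableEntryBody =
  Plus (EMul (EEq (Arg 3) (Const 0)) (EMem (Arg 5) (Arg 4)))
  (Plus (EMul (EEq (Arg 3) (Const 2)) (EConj (EMem (Plus (EMul (Arg 1) (Arg 8)) (Arg 4)) (Arg 6))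
                                         (EMem (Plus (EMul (Arg 0) (Arg 8)) (Arg 4)) (Arg 6))))
  (Plus (EMul (EEq (Arg 3) (Const 3)) (ESg (Plus (EMem (Plus (EMul (Arg 1) (Arg 8)) (Arg 4)) (Arg 6))
                                         (EMem (Plus (EMul (Arg 0) (Arg 8)) (Arg 4)) (Arg 6)))))
  (Plus (EMul (EEq (Arg 3) (Const 4))
          (EForall (Arg 8) (EImp (EConj (EMem (Arg 0) (Arg 8)) (EConj (ECodeLe (Arg 5) (Arg 0) (Arg 10))
                                        (EMem (Plus (EMul (Arg 2) (Arg 9)) (Arg 0)) (Arg 7))))
                               (EMem (Plus (EMul (Arg 1) (Arg 9)) (Arg 0)) (Arg 7)))))
        (EMul (EEq (Arg 3) (Const 5))
          (EForall (Arg 8) (EImp (EConj (EMem (Arg 0) (Arg 8)) (ECodeR (Arg 5) (Arg 0) (Arg 10)))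
                               (EMem (Plus (EMul (Arg 3) (Arg 9)) (Arg 0)) (Arg 7))))))))"

definition ETableEntry :: pexp where
  "ETableEntry =
     ELet (EFst (Arg 1)) (ELet (ESnd (Arg 2)) (ELet (EFst (Arg 0)) (ELet (ESnd (Arg 1)) ETableEntryBody)))"

lemma wf_pexp_ETableEntry: "wf_pexp 6 ETableEntry"
  by (simp add: ETableEntry_def ETableEntryBody_def)

lemma peval_ETableEntry:
  "peval ETableEntry (s # c # tab # w # M # N # env) = of_bool (table_entry N M w c s tab)"
proof -
  obtain a b where ab: "prod_decode c = (a, b)" by fastforce
  obtain x y where xy: "prod_decode b = (x, y)" by fastforce
  show ?thesis
    unfolding ETableEntry_def ETableEntryBody_def
    by (simp add: ab xy table_entry_def Let_def numeral_eq_Suc) blast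
qed

definition ETableStep :: pexp where
  "ETableStep =
     Plus (Arg 1) (EMul (EPow2 (EMul (Arg 0) (Arg 3))) (ESum (Arg 3) (EMul ETableEntry (EPow2 (Arg 0)))))"

definition ETable :: pexp where
  "ETable = Rec (Plus (Arg 2) (Const 1)) (Const 0) ETableStep"

definition ECodedValid :: pexp where
  "ECodedValid =
     ELet (EPow2 (Plus (Arg 0) (Const 1)))
       (EForall (EPow2 (Arg 0)) (ELet ETable
         (EForall (Arg 2)
           (EImp (EMem (Arg 0) (Arg 2)) (EMem (Plus (EMul (Arg 4) (Arg 3)) (Arg 0)) (Arg 1))))))"

lemma wf_pexp_ECodedValid: "wf_pexp 1 ECodedValid"
  using wf_pexp_ETableEntry by (simp add: ECodedValid_def ETable_def ETableStep_def numeral_eq_Suc)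

lemma sum_of_bool_power2_eq_set_encode:
  "(\<Sum>s<M. of_bool (P s) * 2 ^ s) = set_encode {s. s < M \<and> P s}"
proof -
  have "set_encode {s. s < M \<and> P s} = (\<Sum>s\<in>{..<M} \<inter> {s. P s}. 2 ^ s)"
    unfolding set_encode_def by (rule sum.cong) auto
  also have "\<dots> = (\<Sum>s<M. of_bool (P s) * 2 ^ s)"
    by (simp add: sum.inter_restrict of_bool_def) (rule sum.cong, auto)
  finally show ?thesis by simp
qed

lemma peval_ETableStep:
  "peval ETableStep (c # tab # w # M # N # env) = tab + 2 ^ (c * M) * table_row N M w c tab"
  unfolding ETableStep_def table_row_def
  by (simp add: peval_ETableEntry sum_of_bool_power2_eq_set_encode)

lemma peval_ETable: "peval ETable (w # M # N # env) = table N M w (Suc N)"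
proof -
  have "(\<lambda>c tab. peval ETableStep (c # tab # w # M # N # env))
      = (\<lambda>c tab. tab + 2 ^ (c * M) * table_row N M w c tab)"
    by (intro ext) (rule peval_ETableStep)
  then show ?thesis unfolding ETable_def table_def by simp
qed

lemma peval_ECodedValid: "peval ECodedValid [k] = of_bool (coded_valid k)"
  unfolding ECodedValid_def coded_valid_def by (simp add: peval_ETable del: table_Suc) blast

theorem theorem4p26:
  shows "decidable_forms LC_prf"
proof (rule decidable_formsI)
  show "computable 1 (peval ECodedValid)"
    by (rule computable_peval[OF wf_pexp_ECodedValid])
  show "peval ECodedValid [enc A] = of_bool (LC_prf A)" for A
    by (simp add: peval_ECodedValid coded_valid_enc_iff_LC_prf)
qed

end
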